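(* Let $G$ be a countable group with a subgroup $\Gamma$ of index $m$ and a subgroup $H\lhd\Gamma$ of cardinality $d$ such that $\Gamma/H$ is abelian. Then for every finitely additive left-invariant mean $\mu$ on $G$ we have $\textup{dc}_\mu(G)\ge\frac{1}{m^2d}$. Moreover, if $G$ is finitely generated and $M$ is a sequence of probability measures on $G$ that measures index uniformly then $\textup{dc}_M(G)\ge\frac{1}{m^2d}$.
   Context: A finitely additive left-invariant mean is a positive normalised linear functional $\int\cdot\,d\mu$ on $\ell^\infty(G)$ invariant under $f\mapsto f(g^{-1}\cdot)$; $\mu(X)=\int1_X\,d\mu$; product mean $\int f\,d(\mu\times\mu)=\int_x\int_y f(x,y)\,d\mu(x)\,d\mu(y)$; $\textup{dc}_\mu(G)=(\mu\times\mu)(\{(x,y):xy=yx\})$. A sequence $M=(\mu_n)$ of probability measures measures index uniformly if $\mu_n(xH)\to1/[G:H]$ uniformly over $x\in G$ and subgroups $H$ (with $1/[G:H]=0$ for infinite index), and $\textup{dc}_M(G)=\limsup_n\textup{dc}_{\mu_n}(G)$ where $\textup{dc}_{\mu_n}(G)=(\mu_n\times\mu_n)(\{(x,y):xy=yx\})$. *)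

theory Defs
  imports "HOL-Analysis.Analysis" "HOL-Algebra.Algebra" "HOL-Probability.Probability"
begin

text \<open>Index [G:H] as a natural number; it is 0 when the index is infinite, so
  that inverse (real (group_index G H)) = 1/[G:H] with the convention 1/infinity = 0.\<close>
definition group_index :: "('a, 'b) monoid_scheme \<Rightarrow> 'a set \<Rightarrow> nat" where
  "group_index G H = card (rcosets\<^bsub>G\<^esub> H)"

definition bounded_on :: "'a set \<Rightarrow> ('a \<Rightarrow> real) \<Rightarrow> bool" where
  "bounded_on S f \<longleftrightarrow> (\<exists>B. \<forall>x\<in>S. \<bar>f x\<bar> \<le> B)"

definition left_inv_mean :: "('a, 'b) monoid_scheme \<Rightarrow> (('a \<Rightarrow> real) \<Rightarrow> real) \<Rightarrow> bool" where
  "left_inv_mean G \<mu> \<longleftrightarrow>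
     (\<forall>f g. bounded_on (carrier G) f \<and> bounded_on (carrier G) g \<longrightarrow>
        \<mu> (\<lambda>x. f x + g x) = \<mu> f + \<mu> g) \<and>
     (\<forall>c f. bounded_on (carrier G) f \<longrightarrow> \<mu> (\<lambda>x. c * f x) = c * \<mu> f) \<and>
     (\<forall>f. bounded_on (carrier G) f \<and> (\<forall>x\<in>carrier G. 0 \<le> f x) \<longrightarrow> 0 \<le> \<mu> f) \<and>
     (\<forall>f g. (\<forall>x\<in>carrier G. f x = g x) \<longrightarrow> \<mu> f = \<mu> g) \<and>
     \<mu> (\<lambda>x. 1) = 1 \<and>
     (\<forall>g\<in>carrier G. \<forall>f. bounded_on (carrier G) f \<longrightarrow>
        \<mu> (\<lambda>x. f (inv\<^bsub>G\<^esub> g \<otimes>\<^bsub>G\<^esub> x)) = \<mu> f)"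

text \<open>dc_mu(G) = (mu x mu)({(x,y). xy = yx}), the product mean being the iterated mean.\<close>
definition dc_mean :: "('a, 'b) monoid_scheme \<Rightarrow> (('a \<Rightarrow> real) \<Rightarrow> real) \<Rightarrow> real" where
  "dc_mean G \<mu> = \<mu> (\<lambda>x. \<mu> (\<lambda>y. if x \<otimes>\<^bsub>G\<^esub> y = y \<otimes>\<^bsub>G\<^esub> x then 1 else 0))"

definition dc_pmf :: "('a, 'b) monoid_scheme \<Rightarrow> 'a pmf \<Rightarrow> real" where
  "dc_pmf G p = measure_pmf.prob (pair_pmf p p) {(x, y). x \<otimes>\<^bsub>G\<^esub> y = y \<otimes>\<^bsub>G\<^esub> x}"

definition measures_index_uniformly :: "('a, 'b) monoid_scheme \<Rightarrow> (nat \<Rightarrow> 'a pmf) \<Rightarrow> bool" where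
  "measures_index_uniformly G M \<longleftrightarrow>
     (\<forall>n. set_pmf (M n) \<subseteq> carrier G) \<and>
     (\<forall>\<epsilon>>0. \<exists>N. \<forall>n\<ge>N. \<forall>H. subgroup H G \<longrightarrow> (\<forall>x\<in>carrier G.
        \<bar>measure_pmf.prob (M n) (x <#\<^bsub>G\<^esub> H) - inverse (real (group_index G H))\<bar> < \<epsilon>))"

definition dc_seq :: "('a, 'b) monoid_scheme \<Rightarrow> (nat \<Rightarrow> 'a pmf) \<Rightarrow> ereal" where
  "dc_seq G M = limsup (\<lambda>n. ereal (dc_pmf G (M n)))"

definition finitely_generated_group :: "('a, 'b) monoid_scheme \<Rightarrow> bool" where
  "finitely_generated_group G \<longleftrightarrow> (\<exists>S. finite S \<and> S \<subseteq> carrier G \<and> generate G S = carrier G)"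

end

theory Submission
  imports Defs
begin

text \<open>Since \<open>\<Gamma>/H\<close> is abelian, every \<open>\<Gamma>\<close>-conjugate of \<open>x \<in> \<Gamma>\<close> lies in the coset \<open>xH\<close>, so by
  orbit-stabiliser the centraliser of \<open>x\<close> in \<open>\<Gamma>\<close> has index at most \<open>d\<close> in \<open>\<Gamma>\<close>, hence index at
  most \<open>md\<close> in \<open>G\<close>. A left-invariant mean gives every subgroup of index \<open>n\<close> mass at least
  \<open>1/n\<close> (the \<open>n\<close> left translates of it cover \<open>G\<close>), and a sequence measuring index uniformly
  does so up to an error tending to 0. Counting only commuting pairs \<open>(x, y)\<close> with \<open>x \<in> \<Gamma>\<close>
  already gives mass at least \<open>1/m \<cdot> 1/(md)\<close>.\<close>

definition centralizer_in :: "('a, 'b) monoid_scheme \<Rightarrow> 'a set \<Rightarrow> 'a \<Rightarrow> 'a set" where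
  "centralizer_in G \<Gamma> x = {y \<in> \<Gamma>. x \<otimes>\<^bsub>G\<^esub> y = y \<otimes>\<^bsub>G\<^esub> x}"

lemma (in group) card_rcosets_le_mult_card_rcosets:
  assumes \<Gamma>: "subgroup \<Gamma> G" and K: "subgroup K (G\<lparr>carrier := \<Gamma>\<rparr>)"
    and fin\<Gamma>: "finite (rcosets \<Gamma>)" and finK: "finite (rcosets\<^bsub>G\<lparr>carrier := \<Gamma>\<rparr>\<^esub> K)"
  shows "finite (rcosets K) \<and> card (rcosets K) \<le> card (rcosets \<Gamma>) * card (rcosets\<^bsub>G\<lparr>carrier := \<Gamma>\<rparr>\<^esub> K)"
proof -
  have KG: "subgroup K G" using incl_subgroup[OF \<Gamma> K] .
  have \<Gamma>G: "\<Gamma> \<subseteq> carrier G" using subgroup.subset[OF \<Gamma>] .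
  define rep where "rep A = (SOME a. a \<in> A)" for A :: "'a set"
  let ?P = "(rcosets \<Gamma>) \<times> (rcosets\<^bsub>G\<lparr>carrier := \<Gamma>\<rparr>\<^esub> K)"
  have cover: "rcosets K \<subseteq> (\<lambda>(A, B). B #> rep A) ` ?P"
  proof
    fix C assume "C \<in> rcosets K"
    then obtain y where y: "y \<in> carrier G" and C: "C = K #> y" unfolding RCOSETS_def by auto
    define a where "a = rep (\<Gamma> #> y)"
    have "a \<in> \<Gamma> #> y"
      unfolding a_def rep_def using rcos_self[OF y \<Gamma>] by (rule someI)
    hence ac: "a \<in> carrier G" and "a \<otimes> inv y \<in> \<Gamma>"
      using r_coset_subset_G[OF \<Gamma>G y] subgroup.rcos_module_imp[OF \<Gamma> is_group y] by auto
    hence "inv (a \<otimes> inv y) \<in> \<Gamma>" using subgroup.m_inv_closed[OF \<Gamma>] by blast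
    hence g\<Gamma>: "y \<otimes> inv a \<in> \<Gamma>" using ac y by (simp add: inv_mult_group)
    have "C = (K #> (y \<otimes> inv a)) #> a"
      using C coset_mult_assoc[OF subgroup.subset[OF KG]] ac y by (simp add: m_assoc)
    moreover have "(\<Gamma> #> y, K #> (y \<otimes> inv a)) \<in> ?P"
      using g\<Gamma> rcosetsI[OF \<Gamma>G y] unfolding RCOSETS_def r_coset_def by auto
    ultimately show "C \<in> (\<lambda>(A, B). B #> rep A) ` ?P"
      unfolding a_def by (auto intro: image_eqI)
  qed
  have finP: "finite ?P" using fin\<Gamma> finK by blast
  have "card (rcosets K) \<le> card ((\<lambda>(A, B). B #> rep A) ` ?P)"
    using cover finP by (simp add: card_mono)
  also have "\<dots> \<le> card ?P" using finP by (rule card_image_le)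
  finally show ?thesis
    using finite_subset[OF cover finite_imageI[OF finP]] by (simp add: card_cartesian_product)
qed

lemma (in group) conjugate_mem_coset_of_comm_quotient:
  assumes \<Gamma>: "subgroup \<Gamma> G" and H: "H \<lhd> G\<lparr>carrier := \<Gamma>\<rparr>"
    and comm: "comm_group (G\<lparr>carrier := \<Gamma>\<rparr> Mod H)"
    and x: "x \<in> \<Gamma>" and g: "g \<in> \<Gamma>"
  shows "g \<otimes> x \<otimes> inv g \<in> (\<otimes>) x ` H"
proof -
  have xg: "x \<in> carrier G" "g \<in> carrier G" using x g subgroup.subset[OF \<Gamma>] by auto
  have "inv x \<otimes> g \<otimes> inv (inv x) \<otimes> inv g \<in> derived_set G \<Gamma>"
    using subgroup.m_inv_closed[OF \<Gamma> x] g by (intro UN_I) auto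
  then have "inv x \<otimes> g \<otimes> inv (inv x) \<otimes> inv g \<in> derived G \<Gamma>"
    unfolding derived_def by (rule generate.incl)
  then have "inv x \<otimes> g \<otimes> x \<otimes> inv g \<in> H"
    using derived_of_subgroup_minimal[OF H \<Gamma> comm] xg by auto
  moreover have "g \<otimes> x \<otimes> inv g = x \<otimes> (inv x \<otimes> g \<otimes> x \<otimes> inv g)"
    using xg by (simp add: m_assoc[symmetric])
  ultimately show ?thesis by blast
qed

lemma (in group) card_rcosets_centralizer_in_le:
  assumes \<Gamma>: "subgroup \<Gamma> G" and H: "H \<lhd> G\<lparr>carrier := \<Gamma>\<rparr>"
    and comm: "comm_group (G\<lparr>carrier := \<Gamma>\<rparr> Mod H)" and finH: "finite H" and x: "x \<in> \<Gamma>"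
  shows "subgroup (centralizer_in G \<Gamma> x) (G\<lparr>carrier := \<Gamma>\<rparr>)"
    and "finite (rcosets\<^bsub>G\<lparr>carrier := \<Gamma>\<rparr>\<^esub> centralizer_in G \<Gamma> x)"
    and "card (rcosets\<^bsub>G\<lparr>carrier := \<Gamma>\<rparr>\<^esub> centralizer_in G \<Gamma> x) \<le> card H"
proof -
  let ?\<Gamma> = "G\<lparr>carrier := \<Gamma>\<rparr>"
  interpret \<Gamma>: group ?\<Gamma> using subgroup_imp_group[OF \<Gamma>] .
  let ?conj = "\<lambda>g. \<lambda>h \<in> \<Gamma>. g \<otimes>\<^bsub>?\<Gamma>\<^esub> h \<otimes>\<^bsub>?\<Gamma>\<^esub> inv\<^bsub>?\<Gamma>\<^esub> g"
  interpret conj: group_action ?\<Gamma> \<Gamma> ?conj using \<Gamma>.action_by_conjugation by simp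
  have sub: "y \<in> carrier G" if "y \<in> \<Gamma>" for y using that subgroup.subset[OF \<Gamma>] by auto
  have conj_x: "?conj g x = g \<otimes> x \<otimes> inv g" if "g \<in> \<Gamma>" for g
    using that x \<Gamma> by simp
  have comm_iff: "g \<otimes> x \<otimes> inv g = x \<longleftrightarrow> x \<otimes> g = g \<otimes> x" if "g \<in> \<Gamma>" for g
    using inv_solve_right'[OF sub[OF x] _ sub[OF that], of "g \<otimes> x"] sub[OF x] sub[OF that] by auto
  have "g \<in> stabilizer ?\<Gamma> ?conj x \<longleftrightarrow> g \<in> centralizer_in G \<Gamma> x" for g
    using conj_x[of g] comm_iff[of g] unfolding stabilizer_def centralizer_in_def by auto
  then have stab: "stabilizer ?\<Gamma> ?conj x = centralizer_in G \<Gamma> x" by blast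
  have orbit: "orbit ?\<Gamma> ?conj x \<subseteq> (\<otimes>) x ` H"
    unfolding orbit_def using conjugate_mem_coset_of_comm_quotient[OF \<Gamma> H comm x] by (auto simp: x \<Gamma>)
  have bij: "bij_betw (\<lambda>R. ?conj (inv\<^bsub>?\<Gamma>\<^esub> (SOME h. h \<in> R)) x)
      (rcosets\<^bsub>?\<Gamma>\<^esub> centralizer_in G \<Gamma> x) (orbit ?\<Gamma> ?conj x)"
    using conj.orbit_stab_fun_is_bij[OF x] unfolding stab .
  then have "finite (orbit ?\<Gamma> ?conj x)" "card (orbit ?\<Gamma> ?conj x) \<le> card H"
    using finH card_image_le[OF finH, of "(\<otimes>) x"] finite_subset[OF orbit] card_mono[OF _ orbit]
    by auto
  then show "finite (rcosets\<^bsub>?\<Gamma>\<^esub> centralizer_in G \<Gamma> x)"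
    and "card (rcosets\<^bsub>?\<Gamma>\<^esub> centralizer_in G \<Gamma> x) \<le> card H"
    using bij_betw_finite[OF bij] bij_betw_same_card[OF bij] by auto
  show "subgroup (centralizer_in G \<Gamma> x) ?\<Gamma>"
    using conj.stabilizer_subgroup[OF x] unfolding stab .
qed

lemma bounded_on_const: "bounded_on S (\<lambda>x. c)"
  unfolding bounded_on_def by blast

lemma bounded_on_indicator: "bounded_on S (\<lambda>x. if P x then 1 else 0)"
  unfolding bounded_on_def by (rule exI[of _ 1]) simp

lemma bounded_on_add: "bounded_on S f \<Longrightarrow> bounded_on S g \<Longrightarrow> bounded_on S (\<lambda>x. f x + g x)"
  unfolding bounded_on_def by (fastforce intro: abs_triangle_ineq[THEN order_trans] add_mono)

lemma bounded_on_diff: "bounded_on S f \<Longrightarrow> bounded_on S g \<Longrightarrow> bounded_on S (\<lambda>x. f x - g x)"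
  unfolding bounded_on_def by (fastforce intro: abs_triangle_ineq4[THEN order_trans] add_mono)

lemma bounded_on_sum:
  "finite A \<Longrightarrow> (\<And>a. a \<in> A \<Longrightarrow> bounded_on S (f a)) \<Longrightarrow> bounded_on S (\<lambda>x. \<Sum>a\<in>A. f a x)"
  by (induction A rule: finite_induct) (auto intro: bounded_on_add bounded_on_const)

context
  fixes G :: "('a, 'b) monoid_scheme" (structure) and \<mu> :: "('a \<Rightarrow> real) \<Rightarrow> real"
  assumes mean: "left_inv_mean G \<mu>"
begin

lemma mean_add:
  "bounded_on (carrier G) f \<Longrightarrow> bounded_on (carrier G) g \<Longrightarrow> \<mu> (\<lambda>x. f x + g x) = \<mu> f + \<mu> g"
  using mean unfolding left_inv_mean_def by blast

lemma mean_cmult: "bounded_on (carrier G) f \<Longrightarrow> \<mu> (\<lambda>x. c * f x) = c * \<mu> f"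
  using mean unfolding left_inv_mean_def by blast

lemma mean_nonneg: "bounded_on (carrier G) f \<Longrightarrow> (\<And>x. x \<in> carrier G \<Longrightarrow> 0 \<le> f x) \<Longrightarrow> 0 \<le> \<mu> f"
  using mean unfolding left_inv_mean_def by blast

lemma mean_const_one: "\<mu> (\<lambda>x. 1) = 1"
  using mean unfolding left_inv_mean_def by blast

lemma mean_left_translate:
  "g \<in> carrier G \<Longrightarrow> bounded_on (carrier G) f \<Longrightarrow> \<mu> (\<lambda>x. f (inv\<^bsub>G\<^esub> g \<otimes>\<^bsub>G\<^esub> x)) = \<mu> f"
  using mean unfolding left_inv_mean_def by blast

lemma mean_const_zero: "\<mu> (\<lambda>x. 0) = 0"
  using mean_cmult[OF bounded_on_const, of 0 1] by simp

lemma mean_mono: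
  assumes f: "bounded_on (carrier G) f" and g: "bounded_on (carrier G) g"
    and le: "\<And>x. x \<in> carrier G \<Longrightarrow> f x \<le> g x"
  shows "\<mu> f \<le> \<mu> g"
proof -
  have "\<mu> g = \<mu> f + \<mu> (\<lambda>x. g x - f x)"
    using mean_add[OF f bounded_on_diff[OF g f]] by simp
  moreover have "0 \<le> \<mu> (\<lambda>x. g x - f x)"
    using mean_nonneg[OF bounded_on_diff[OF g f]] le by simp
  ultimately show ?thesis by simp
qed

lemma mean_sum:
  "finite A \<Longrightarrow> (\<And>a. a \<in> A \<Longrightarrow> bounded_on (carrier G) (f a)) \<Longrightarrow>
    \<mu> (\<lambda>x. \<Sum>a\<in>A. f a x) = (\<Sum>a\<in>A. \<mu> (f a))"
proof (induction A rule: finite_induct)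
  case empty
  then show ?case using mean_const_zero by simp
next
  case (insert a A)
  then show ?case
    using mean_add[of "f a" "\<lambda>x. \<Sum>b\<in>A. f b x"] bounded_on_sum[of A "carrier G" f] by simp
qed

lemma mean_indicator_bounds: "0 \<le> \<mu> (\<lambda>x. if P x then 1 else 0) \<and> \<mu> (\<lambda>x. if P x then 1 else 0) \<le> 1"
  using mean_nonneg[OF bounded_on_indicator, of P]
    mean_mono[OF bounded_on_indicator bounded_on_const, of P 1] mean_const_one by simp

lemma mean_iterated_indicator_ge:
  assumes b: "0 \<le> b" and A: "\<And>x. x \<in> A \<Longrightarrow> b \<le> \<mu> (\<lambda>y. if P x y then 1 else 0)"
  shows "b * \<mu> (\<lambda>x. if x \<in> A then 1 else 0) \<le> \<mu> (\<lambda>x. \<mu> (\<lambda>y. if P x y then 1 else 0))"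
proof -
  have bounded: "bounded_on (carrier G) (\<lambda>x. \<mu> (\<lambda>y. if P x y then 1 else 0))"
    unfolding bounded_on_def using mean_indicator_bounds by (intro exI[of _ 1]) auto
  have "b * \<mu> (\<lambda>x. if x \<in> A then 1 else 0) = \<mu> (\<lambda>x. b * (if x \<in> A then 1 else 0))"
    using mean_cmult[OF bounded_on_indicator] by simp
  also have "\<dots> \<le> \<mu> (\<lambda>x. \<mu> (\<lambda>y. if P x y then 1 else 0))"
    using A mean_indicator_bounds
    by (intro mean_mono[OF _ bounded]) (auto simp: bounded_on_def intro!: exI[of _ "\<bar>b\<bar>"])
  finally show ?thesis .
qed

lemma mean_subgroup_ge:
  assumes G: "group G" and K: "subgroup K G"
  shows "inverse (real (group_index G K)) \<le> \<mu> (\<lambda>y. if y \<in> K then 1 else 0)"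
proof (cases "finite (rcosets K)")
  case False
  then show ?thesis
    using mean_indicator_bounds[of "\<lambda>y. y \<in> K"] by (simp add: group_index_def)
next
  case fin: True
  interpret group G by fact
  define rep where "rep C = (SOME a. a \<in> C)" for C :: "'a set"
  let ?\<chi> = "\<lambda>C y. if rep C \<otimes> y \<in> K then 1 else 0 :: real"
  have rep: "rep C \<in> C" "rep C \<in> carrier G" if C: "C \<in> rcosets K" for C
  proof -
    obtain a where a: "a \<in> carrier G" "C = K #> a" using C unfolding RCOSETS_def by auto
    then have "a \<in> C" using rcos_self[OF a(1) K] by simp
    then show "rep C \<in> C" unfolding rep_def by (rule someI)
    then show "rep C \<in> carrier G" using a subgroup.rcosets_carrier[OF K is_group C] by auto
  qed
  \<comment> \<open>Left invariance only moves left cosets, so cover G by the left cosets (rep C)\<inverse> K.\<close>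
  have cover: "1 \<le> (\<Sum>C\<in>rcosets K. ?\<chi> C y)" if y: "y \<in> carrier G" for y
  proof -
    have C: "K #> inv y \<in> rcosets K" using rcosetsI[OF subgroup.subset[OF K]] y by simp
    then obtain k where "k \<in> K" "rep (K #> inv y) = k \<otimes> inv y"
      using rep(1)[OF C] unfolding r_coset_def by blast
    then have "?\<chi> (K #> inv y) y = 1"
      using y subgroup.mem_carrier[OF K] by (simp add: m_assoc)
    then show ?thesis
      using member_le_sum[OF C, of "\<lambda>C. ?\<chi> C y"] fin by simp
  qed
  have translate: "\<mu> (?\<chi> C) = \<mu> (\<lambda>y. if y \<in> K then 1 else 0)" if "C \<in> rcosets K" for C
    using mean_left_translate[OF inv_closed[OF rep(2)[OF that]] bounded_on_indicator, of "\<lambda>y. y \<in> K"]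
      rep(2)[OF that] by simp
  have "1 = \<mu> (\<lambda>y. 1)" using mean_const_one by simp
  also have "\<dots> \<le> \<mu> (\<lambda>y. \<Sum>C\<in>rcosets K. ?\<chi> C y)"
    using cover fin by (intro mean_mono bounded_on_const bounded_on_sum bounded_on_indicator) auto
  also have "\<dots> = (\<Sum>C\<in>rcosets K. \<mu> (?\<chi> C))"
    using fin by (intro mean_sum bounded_on_indicator)
  also have "\<dots> = real (group_index G K) * \<mu> (\<lambda>y. if y \<in> K then 1 else 0)"
    using translate by (simp add: group_index_def)
  finally show ?thesis
    using mean_indicator_bounds[of "\<lambda>y. y \<in> K"]
    by (cases "group_index G K = 0") (auto simp: field_simps)
qed

end

lemma (in group) inverse_index_centralizer_in_ge:
  assumes \<Gamma>: "subgroup \<Gamma> G" and H: "H \<lhd> G\<lparr>carrier := \<Gamma>\<rparr>"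
    and comm: "comm_group (G\<lparr>carrier := \<Gamma>\<rparr> Mod H)" and finH: "finite H"
    and fin\<Gamma>: "finite (rcosets \<Gamma>)" and x: "x \<in> \<Gamma>"
  shows "subgroup (centralizer_in G \<Gamma> x) G"
    and "1 / (real (group_index G \<Gamma>) * real (card H))
           \<le> inverse (real (group_index G (centralizer_in G \<Gamma> x)))"
proof -
  note C = card_rcosets_centralizer_in_le[OF \<Gamma> H comm finH x]
  show CG: "subgroup (centralizer_in G \<Gamma> x) G" using incl_subgroup[OF \<Gamma> C(1)] .
  note index = card_rcosets_le_mult_card_rcosets[OF \<Gamma> C(1) fin\<Gamma> C(2)]
  have "centralizer_in G \<Gamma> x #> \<one> \<in> rcosets (centralizer_in G \<Gamma> x)"
    using rcosetsI[OF subgroup.subset[OF CG]] by simp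
  then have "0 < group_index G (centralizer_in G \<Gamma> x)"
    using index card_gt_0_iff unfolding group_index_def by blast
  moreover have "group_index G (centralizer_in G \<Gamma> x) \<le> group_index G \<Gamma> * card H"
    using index C(3) unfolding group_index_def by (meson le_trans mult_le_mono2)
  ultimately show "1 / (real (group_index G \<Gamma>) * real (card H))
      \<le> inverse (real (group_index G (centralizer_in G \<Gamma> x)))"
    by (metis inverse_eq_divide le_imp_inverse_le of_nat_0_less_iff of_nat_le_iff of_nat_mult)
qed

lemma dc_mean_ge:
  fixes G (structure)
  assumes G: "group G" and \<Gamma>: "subgroup \<Gamma> G" and H: "H \<lhd> G\<lparr>carrier := \<Gamma>\<rparr>"
    and comm: "comm_group (G\<lparr>carrier := \<Gamma>\<rparr> Mod H)" and finH: "finite H"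
    and fin\<Gamma>: "finite (rcosets \<Gamma>)" and \<mu>: "left_inv_mean G \<mu>"
  shows "1 / (real (group_index G \<Gamma>) ^ 2 * real (card H)) \<le> dc_mean G \<mu>"
proof -
  interpret group G by fact
  define m where "m = real (group_index G \<Gamma>)"
  define d where "d = real (card H)"
  have centralizer: "1 / (m * d) \<le> \<mu> (\<lambda>y. if x \<otimes> y = y \<otimes> x then 1 else 0)" if x: "x \<in> \<Gamma>" for x
  proof -
    note C = inverse_index_centralizer_in_ge[OF \<Gamma> H comm finH fin\<Gamma> x]
    have "1 / (m * d) \<le> \<mu> (\<lambda>y. if y \<in> centralizer_in G \<Gamma> x then 1 else 0)"
      unfolding m_def d_def using C(2) mean_subgroup_ge[OF \<mu> G C(1)] by linarith
    also have "\<dots> \<le> \<mu> (\<lambda>y. if x \<otimes> y = y \<otimes> x then 1 else 0)"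
      by (intro mean_mono[OF \<mu>] bounded_on_indicator) (auto simp: centralizer_in_def)
    finally show ?thesis .
  qed
  have "1 / (m\<^sup>2 * d) = 1 / (m * d) * inverse m"
    by (simp add: power2_eq_square inverse_eq_divide)
  also have "\<dots> \<le> 1 / (m * d) * \<mu> (\<lambda>y. if y \<in> \<Gamma> then 1 else 0)"
    using mean_subgroup_ge[OF \<mu> G \<Gamma>] unfolding m_def d_def by (intro mult_left_mono) auto
  also have "\<dots> \<le> dc_mean G \<mu>"
    unfolding dc_mean_def m_def d_def using centralizer[unfolded m_def d_def]
    by (intro mean_iterated_indicator_ge[OF \<mu>]) auto
  finally show ?thesis unfolding m_def d_def .
qed

lemma prob_pair_pmf_ge:
  assumes c: "0 \<le> c" and A: "\<And>x. x \<in> A \<Longrightarrow> c \<le> measure_pmf.prob p {y. P x y}"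
  shows "c * measure_pmf.prob p A \<le> measure_pmf.prob (pair_pmf p p) {(x, y). P x y}"
proof -
  let ?S = "{(x, y). P x y}"
  have slice: "(\<integral>\<^sup>+y. indicator ?S (x, y) \<partial>p) = ennreal (measure_pmf.prob p {y. P x y})" for x
  proof -
    have "(\<integral>\<^sup>+y. indicator ?S (x, y) \<partial>p) = (\<integral>\<^sup>+y. indicator {y. P x y} y \<partial>p)"
      by (rule nn_integral_cong) (simp add: indicator_def)
    then show ?thesis by (simp add: measure_pmf.emeasure_eq_measure)
  qed
  have "ennreal (c * measure_pmf.prob p A) = (\<integral>\<^sup>+x. ennreal c * indicator A x \<partial>p)"
    by (simp add: nn_integral_cmult_indicator measure_pmf.emeasure_eq_measure ennreal_mult c)
  also have "\<dots> \<le> (\<integral>\<^sup>+x. \<integral>\<^sup>+y. indicator ?S (x, y) \<partial>p \<partial>p)"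
    unfolding slice using A by (intro nn_integral_mono) (auto simp: indicator_def)
  also have "\<dots> = (\<integral>\<^sup>+z. indicator ?S z \<partial>pair_pmf p p)"
    by (rule nn_integral_pair_pmf'[symmetric])
  also have "\<dots> = ennreal (measure_pmf.prob (pair_pmf p p) ?S)"
    by (simp add: measure_pmf.emeasure_eq_measure)
  finally show ?thesis by (simp add: ennreal_le_iff)
qed

lemma measures_index_uniformly_eventually_prob_ge:
  assumes G: "group G" and M: "measures_index_uniformly G M" and e: "0 < e"
  shows "\<forall>\<^sub>F n in sequentially. \<forall>K. subgroup K G \<longrightarrow>
           inverse (real (group_index G K)) - e \<le> measure_pmf.prob (M n) K"
proof -
  obtain N where N: "\<And>n K x. n \<ge> N \<Longrightarrow> subgroup K G \<Longrightarrow> x \<in> carrier G \<Longrightarrow>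
      \<bar>measure_pmf.prob (M n) (x <#\<^bsub>G\<^esub> K) - inverse (real (group_index G K))\<bar> < e"
    using M e unfolding measures_index_uniformly_def by meson
  have "inverse (real (group_index G K)) - e \<le> measure_pmf.prob (M n) K"
    if "n \<ge> N" "subgroup K G" for n K
    using N[OF that monoid.one_closed[OF group.is_monoid[OF G]]]
      group.lcos_mult_one[OF G subgroup.subset[OF that(2)]]
    by (simp add: abs_less_iff)
  then show ?thesis unfolding eventually_sequentially by blast
qed

lemma dc_seq_ge:
  fixes G (structure)
  assumes G: "group G" and \<Gamma>: "subgroup \<Gamma> G" and H: "H \<lhd> G\<lparr>carrier := \<Gamma>\<rparr>"
    and comm: "comm_group (G\<lparr>carrier := \<Gamma>\<rparr> Mod H)" and finH: "finite H"
    and fin\<Gamma>: "finite (rcosets \<Gamma>)" and M: "measures_index_uniformly G M"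
  shows "ereal (1 / (real (group_index G \<Gamma>) ^ 2 * real (card H))) \<le> dc_seq G M"
proof -
  interpret group G by fact
  define a where "a = 1 / real (group_index G \<Gamma>)"
  define b where "b = 1 / (real (group_index G \<Gamma>) * real (card H))"
  have "\<one> \<in> H"
    using subgroup.one_closed[OF normal.axioms(1)[OF H]] by simp
  moreover have "\<Gamma> #> \<one> \<in> rcosets \<Gamma>"
    using rcosetsI[OF subgroup.subset[OF \<Gamma>]] by simp
  ultimately have "0 < group_index G \<Gamma>" "0 < card H"
    using finH fin\<Gamma> card_gt_0_iff unfolding group_index_def by blast+
  then have "0 < b" unfolding b_def by simp
  have approx: "ereal ((a - e) * (b - e)) \<le> dc_seq G M" if e: "0 < e" "e < b" for e
  proof -
    have "\<forall>\<^sub>F n in sequentially. (a - e) * (b - e) \<le> dc_pmf G (M n)"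
      using measures_index_uniformly_eventually_prob_ge[OF G M e(1)]
    proof eventually_elim
      case (elim n)
      have "a - e \<le> measure_pmf.prob (M n) \<Gamma>"
        using elim \<Gamma> unfolding a_def by (simp add: inverse_eq_divide)
      moreover have "b - e \<le> measure_pmf.prob (M n) {y. x \<otimes> y = y \<otimes> x}" if x: "x \<in> \<Gamma>" for x
      proof -
        note C = inverse_index_centralizer_in_ge[OF \<Gamma> H comm finH fin\<Gamma> x]
        have "b - e \<le> measure_pmf.prob (M n) (centralizer_in G \<Gamma> x)"
          using elim C unfolding b_def by force
        also have "\<dots> \<le> measure_pmf.prob (M n) {y. x \<otimes> y = y \<otimes> x}"
          by (rule measure_pmf.finite_measure_mono) (auto simp: centralizer_in_def)
        finally show ?thesis .
      qed
      then have "(b - e) * measure_pmf.prob (M n) \<Gamma> \<le> dc_pmf G (M n)"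
        unfolding dc_pmf_def using e by (intro prob_pair_pmf_ge) auto
      ultimately show ?case
        using e by (metis diff_ge_0_iff_ge less_imp_le mult.commute mult_left_mono order_trans)
    qed
    then have "\<forall>\<^sub>F n in sequentially. ereal ((a - e) * (b - e)) \<le> ereal (dc_pmf G (M n))"
      by eventually_elim simp
    then show ?thesis
      unfolding dc_seq_def by (rule le_Limsup[OF trivial_limit_sequentially])
  qed
  have eventually_le: "\<forall>\<^sub>F e in at_right 0. ereal ((a - e) * (b - e)) \<le> dc_seq G M"
    using eventually_at_right_real[OF \<open>0 < b\<close>] by eventually_elim (simp add: approx)
  have "((\<lambda>e. ereal ((a - e) * (b - e))) \<longlongrightarrow> ereal (a * b)) (at_right 0)"
    by (intro tendsto_eq_intros) auto
  then have "ereal (a * b) \<le> dc_seq G M"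
    using eventually_le trivial_limit_at_right_real by (rule tendsto_upperbound)
  then show ?thesis
    unfolding a_def b_def by (simp add: power2_eq_square mult.assoc)
qed

theorem proposition1p17:
  fixes G :: "('a, 'b) monoid_scheme" and \<Gamma> H :: "'a set" and m d :: nat
  assumes "group G"
    and "countable (carrier G)"
    and "subgroup \<Gamma> G"
    and "group_index G \<Gamma> = m" and "m \<ge> 1"
    and "H \<lhd> G\<lparr>carrier := \<Gamma>\<rparr>"
    and "finite H" and "card H = d"
    and "comm_group (G\<lparr>carrier := \<Gamma>\<rparr> Mod H)"
  shows "(\<forall>\<mu>. left_inv_mean G \<mu> \<longrightarrow> dc_mean G \<mu> \<ge> 1 / (real m ^ 2 * real d))
       \<and> (finitely_generated_group G \<longrightarrow>
           (\<forall>M. measures_index_uniformly G M \<longrightarrow>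
              dc_seq G M \<ge> ereal (1 / (real m ^ 2 * real d))))"
proof -
  have "finite (rcosets\<^bsub>G\<^esub> \<Gamma>)"
    using assms(4,5) card.infinite unfolding group_index_def by fastforce
  then show ?thesis
    using dc_mean_ge[OF assms(1,3,6,9,7)] dc_seq_ge[OF assms(1,3,6,9,7)] assms(4,8) by auto
qed

end
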